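(* Let $k\ge 0$ be an integer and let $g_{-k}<\dots<g_{-1}<g_0<g_1<\dots<g_k$ be the zeros of the Legendre polynomial $L_{2k+1}$ of degree $2k+1$ on $[-1,1]$, so that $g_{-i}=-g_i$ and $g_0=0$. Let $\hat v$ be a polynomial on $\hat K=[-1,1]^2$ whose restriction to each of the four edges of $\hat K$ is a polynomial (in the edge variable) of degree $\le 2k+1$. Then $$\sum_{i=-k}^{k}\gamma_i\big(\hat v(1,g_i)+\hat v(-1,g_i)\big)=\sum_{i=-k}^{k}\gamma_i\big(\hat v(g_i,1)+\hat v(g_i,-1)\big),$$ where, setting $g_{-(k+1)}:=-1$ and $g_{k+1}:=1$, $$\gamma_i=\prod_{\substack{j=-(k+1)\\ j\neq i}}^{k}\frac{1-g_j}{g_i-g_j}+\prod_{\substack{j=-k\\ j\ne i}}^{k+1}\frac{-1-g_j}{g_i-g_j},\qquad i=-k,\dots,k,$$ and these numbers satisfy $$\gamma_i=\frac{2}{g_i^2}\prod_{\substack{j=1\\ j\neq |i|}}^{k}\frac{1-g_j^2}{g_i^2-g_j^2}\quad (i\neq 0),\qquad \gamma_0=4\prod_{j=1}^{k}\frac{g_j^2-1}{g_j^2}.$$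
   Context: $\hat K=[-1,1]^2$ is the reference square with coordinates $(\hat x,\hat y)$. $L_n$ denotes the Legendre polynomial of degree $n$ on $[-1,1]$. Empty products equal $1$. *)

theory Defs
  imports "HOL-Analysis.Analysis" "HOL-Computational_Algebra.Polynomial"
begin

text \<open>Legendre polynomials on [-1,1], standard normalisation L_n(1) = 1, via Bonnet's recurrence
  (n+2) L_(n+2) = (2n+3) x L_(n+1) - (n+1) L_n.\<close>
fun legendre :: "nat \<Rightarrow> real poly" where
  "legendre 0 = 1"
| "legendre (Suc 0) = [:0, 1:]"
| "legendre (Suc (Suc n)) =
     smult (1 / real (n + 2))
       (smult (real (2 * n + 3)) ([:0, 1:] * legendre (Suc n)) - smult (real (n + 1)) (legendre n))"

definition bivariate_polynomial :: "(real \<Rightarrow> real \<Rightarrow> real) \<Rightarrow> bool" where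
  "bivariate_polynomial v \<longleftrightarrow>
     (\<exists>(c :: nat \<Rightarrow> nat \<Rightarrow> real) (N :: nat).
        \<forall>x y. v x y = (\<Sum>a\<le>N. \<Sum>b\<le>N. c a b * x ^ a * y ^ b))"

definition poly_deg_le_on_edge :: "(real \<Rightarrow> real) \<Rightarrow> nat \<Rightarrow> bool" where
  "poly_deg_le_on_edge f d \<longleftrightarrow>
     (\<exists>p :: real poly. degree p \<le> d \<and> (\<forall>t\<in>{-1..1}. f t = poly p t))"

definition ext_node :: "nat \<Rightarrow> (int \<Rightarrow> real) \<Rightarrow> int \<Rightarrow> real" where
  "ext_node k g i = (if i = - (int k + 1) then -1 else if i = int k + 1 then 1 else g i)"

definition gamma_w :: "nat \<Rightarrow> (int \<Rightarrow> real) \<Rightarrow> int \<Rightarrow> real" where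
  "gamma_w k g i =
     (\<Prod>j\<in>{- (int k + 1)..int k} - {i}. (1 - ext_node k g j) / (ext_node k g i - ext_node k g j))
   + (\<Prod>j\<in>{- int k..int k + 1} - {i}. (-1 - ext_node k g j) / (ext_node k g i - ext_node k g j))"

end

theory Submission
  imports Defs
begin

text \<open>
  The weights are designed so that \<open>\<Sum>\<^sub>i \<gamma>\<^sub>i p(g\<^sub>i) = 2 (p(1) + p(-1))\<close> for every polynomial \<open>p\<close> of
  degree \<open>\<le> 2k+1\<close>: the first product in \<open>\<gamma>\<^sub>i\<close> is the Lagrange basis polynomial of the node \<open>g\<^sub>i\<close>
  for the \<open>2k+2\<close> nodes \<open>-1, g\<^sub>-\<^sub>k, \<dots>, g\<^sub>k\<close> evaluated at \<open>1\<close>, and the basis polynomial of \<open>-1\<close> takes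
  the value \<open>\<Prod>\<^sub>j (1 - g\<^sub>j)/(-1 - g\<^sub>j) = -1\<close> there because the Legendre zeros are symmetric; the
  second product is the mirror image. Applying this to the four edge restrictions of \<open>v\<close>, both
  sides of the identity equal twice the sum of the values of \<open>v\<close> at the four corners.
\<close>

lemma lagrange_interpolation:
  fixes p :: "'b :: field poly" and x :: "'a \<Rightarrow> 'b"
  assumes inj: "inj_on x I" and deg: "degree p < card I"
  shows "poly p y = (\<Sum>i\<in>I. poly p (x i) * (\<Prod>j\<in>I-{i}. (y - x j) / (x i - x j)))"
proof -
  have "card I > 0" using deg by auto
  then have fin: "finite I" by (rule card_ge_0_finite)
  define L where "L i = (\<Prod>j\<in>I-{i}. [:- x j / (x i - x j), 1 / (x i - x j):])" for i
  have poly_L: "poly (L i) z = (\<Prod>j\<in>I-{i}. (z - x j) / (x i - x j))" for i z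
    unfolding L_def poly_prod by (intro prod.cong) (auto simp: diff_divide_distrib)
  have degree_L: "degree (L i) \<le> card I - 1" if "i \<in> I" for i
  proof -
    have "degree (L i) \<le> (\<Sum>j\<in>I-{i}. degree [:- x j / (x i - x j), 1 / (x i - x j):])"
      unfolding L_def using fin by (intro degree_prod_sum_le[unfolded o_def]) auto
    also have "\<dots> \<le> (\<Sum>j\<in>I-{i}. 1)"
      by (intro sum_mono) auto
    finally show ?thesis using that fin by simp
  qed
  have L_at_nodes: "poly (L i) (x m) = (if i = m then 1 else 0)" if "i \<in> I" "m \<in> I" for i m
  proof (cases "i = m")
    case True
    then show ?thesis
      unfolding poly_L using inj that by (simp, intro prod.neutral) (auto simp: inj_on_def)
  next
    case False
    have "poly (L i) (x m) = 0"
      unfolding poly_L using False that fin by (intro prod_zero) auto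
    with False show ?thesis by simp
  qed
  define q where "q = (\<Sum>i\<in>I. smult (poly p (x i)) (L i))"
  have q_at_nodes: "poly q (x m) = poly p (x m)" if "m \<in> I" for m
  proof -
    have "poly q (x m) = (\<Sum>i\<in>I. if i = m then poly p (x i) else 0)"
      unfolding q_def poly_sum using that by (intro sum.cong) (auto simp: L_at_nodes)
    then show ?thesis using that fin by simp
  qed
  have "degree q \<le> card I - 1"
    unfolding q_def by (intro degree_sum_le[OF fin] order.trans[OF degree_smult_le] degree_L)
  then have "p = q"
    using \<open>card I > 0\<close> deg q_at_nodes card_image[OF inj]
    by (intro poly_eqI_degree[of "x ` I"]) auto
  then have "poly p y = poly q y" by simp
  also have "\<dots> = (\<Sum>i\<in>I. poly p (x i) * (\<Prod>j\<in>I-{i}. (y - x j) / (x i - x j)))"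
    unfolding q_def poly_sum by (simp add: poly_L)
  finally show ?thesis .
qed

lemma legendre_reflect: "poly (legendre n) (- x) = (-1) ^ n * poly (legendre n) x"
  by (induction n rule: legendre.induct) (auto simp: algebra_simps)

lemma legendre_at_one: "poly (legendre n) 1 = 1"
  by (induction n rule: legendre.induct) (auto simp: divide_simps)

lemma legendre_at_minus_one: "poly (legendre n) (-1) = (-1) ^ n"
  using legendre_reflect[of n 1] legendre_at_one[of n] by simp

lemma prod_symmetric_interval:
  fixes f :: "int \<Rightarrow> 'a :: comm_monoid_mult"
  shows "(\<Prod>j\<in>{- int k..int k}. f j) = f 0 * (\<Prod>j\<in>{1..int k}. f j * f (- j))"
proof (induction k)
  case (Suc k)
  have "{- int (Suc k)..int (Suc k)} = insert (- (int k + 1)) (insert (int k + 1) {- int k..int k})"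
    and "{1..int (Suc k)} = insert (int k + 1) {1..int k}" by auto
  then show ?case using Suc by (simp add: mult_ac)
qed simp

lemma strict_mono_on_image_subset_le:
  fixes f h :: "'a :: linorder \<Rightarrow> 'b :: linorder"
  assumes f: "strict_mono_on A f" and h: "strict_mono_on A h" and img: "f ` A \<subseteq> h ` A"
    and i: "i \<in> A" and below: "\<forall>j\<in>A. j < i \<longrightarrow> f j = h j"
  shows "h i \<le> f i"
proof (rule ccontr)
  assume "\<not> h i \<le> f i"
  then have lt: "f i < h i" by simp
  obtain j where j: "j \<in> A" "f i = h j" using img i by auto
  consider "j < i" | "j = i" | "i < j" by fastforce
  then show False
  proof cases
    case 1
    then have "f j = f i" using below j by auto
    then show False using 1 strict_mono_on_imp_inj_on[OF f] i j(1) by (auto dest: inj_onD)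
  next
    case 2
    then show False using j lt by simp
  next
    case 3
    then show False using strict_mono_onD[OF h i j(1)] j lt by simp
  qed
qed

lemma strict_mono_on_image_eq_imp_eq:
  fixes f h :: "'a :: linorder \<Rightarrow> 'b :: linorder"
  assumes fin: "finite A" and f: "strict_mono_on A f" and h: "strict_mono_on A h"
    and img: "f ` A = h ` A" and i: "i \<in> A"
  shows "f i = h i"
proof (rule ccontr)
  assume "f i \<noteq> h i"
  define D where "D = {j\<in>A. f j \<noteq> h j}"
  have "D \<noteq> {}" "finite D" using \<open>f i \<noteq> h i\<close> i fin unfolding D_def by auto
  define i0 where "i0 = Min D"
  have i0: "i0 \<in> A" "f i0 \<noteq> h i0"
    using Min_in[OF \<open>finite D\<close> \<open>D \<noteq> {}\<close>] unfolding i0_def D_def by auto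
  have below: "\<forall>j\<in>A. j < i0 \<longrightarrow> f j = h j"
    using Min_le[OF \<open>finite D\<close>] unfolding i0_def D_def by force
  have "h i0 \<le> f i0" "f i0 \<le> h i0"
    using strict_mono_on_image_subset_le[OF f h _ i0(1)] strict_mono_on_image_subset_le[OF h f _ i0(1)]
      img below by auto
  then show False using i0(2) by simp
qed

lemma bivariate_polynomial_restrict_fst:
  assumes "bivariate_polynomial v"
  shows "\<exists>q. \<forall>t. v x0 t = poly q t"
proof -
  obtain c N where "\<forall>x y. v x y = (\<Sum>a\<le>N. \<Sum>b\<le>N. c a b * x ^ a * y ^ b)"
    using assms unfolding bivariate_polynomial_def by blast
  then show ?thesis
    by (intro exI[of _ "\<Sum>a\<le>N. \<Sum>b\<le>N. smult (c a b * x0 ^ a) (monom 1 b)"])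
       (simp add: poly_sum poly_monom)
qed

lemma bivariate_polynomial_restrict_snd:
  assumes "bivariate_polynomial v"
  shows "\<exists>q. \<forall>t. v t y0 = poly q t"
proof -
  obtain c N where "\<forall>x y. v x y = (\<Sum>a\<le>N. \<Sum>b\<le>N. c a b * x ^ a * y ^ b)"
    using assms unfolding bivariate_polynomial_def by blast
  then show ?thesis
    by (intro exI[of _ "\<Sum>a\<le>N. \<Sum>b\<le>N. smult (c a b * y0 ^ b) (monom 1 a)"])
       (simp add: poly_sum poly_monom mult_ac)
qed

lemma poly_deg_le_on_edge_global:
  assumes "\<forall>t. f t = poly q t" and "poly_deg_le_on_edge f d"
  shows "\<exists>p. degree p \<le> d \<and> (\<forall>t. f t = poly p t)"
proof -
  obtain p where p: "degree p \<le> d" "\<forall>t\<in>{-1..1}. f t = poly p t"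
    using assms(2) unfolding poly_deg_le_on_edge_def by blast
  have "p = q"
  proof (rule ccontr)
    assume "p \<noteq> q"
    then have "finite {x. poly (p - q) x = 0}" by (intro poly_roots_finite) auto
    moreover have "{-1..1::real} \<subseteq> {x. poly (p - q) x = 0}" using p assms(1) by auto
    ultimately have "finite {-1..1::real}" by (rule finite_subset[rotated])
    then show False using infinite_Icc[of "-1::real" 1] by simp
  qed
  then show ?thesis using p assms(1) by auto
qed

locale symmetric_nodes =
  fixes k :: nat and g :: "int \<Rightarrow> real"
  assumes inj: "inj_on g {- int k..int k}"
    and not_one: "\<And>j. j \<in> {- int k..int k} \<Longrightarrow> g j \<noteq> 1"
    and not_minus_one: "\<And>j. j \<in> {- int k..int k} \<Longrightarrow> g j \<noteq> -1"
    and odd: "\<And>j. j \<in> {- int k..int k} \<Longrightarrow> g (- j) = - g j"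
begin

lemma g_zero: "g 0 = 0"
  using odd[of 0] by simp

lemma ext_node_inner: "i \<in> {- int k..int k} \<Longrightarrow> ext_node k g i = g i"
  by (auto simp: ext_node_def)

lemma ext_node_outer: "ext_node k g (- int k - 1) = -1" "ext_node k g (int k + 1) = 1"
  by (auto simp: ext_node_def)

lemma inj_on_ext_node_left: "inj_on (ext_node k g) {- (int k + 1)..int k}"
proof -
  have "{- (int k + 1)..int k} = insert (- (int k + 1)) {- int k..int k}"
    and "\<forall>j\<in>{- int k..int k}. g j \<noteq> -1" using not_minus_one by auto
  then show ?thesis
    using inj by (auto simp: inj_on_def ext_node_def)
qed

lemma inj_on_ext_node_right: "inj_on (ext_node k g) {- int k..int k + 1}"
proof -
  have "{- int k..int k + 1} = insert (int k + 1) {- int k..int k}"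
    and "\<forall>j\<in>{- int k..int k}. g j \<noteq> 1" using not_one by auto
  then show ?thesis
    using inj by (auto simp: inj_on_def ext_node_def)
qed

lemma prod_one_minus_nodes_nonzero: "(\<Prod>j\<in>{- int k..int k}. (1 - g j)) \<noteq> 0"
  using not_one by (simp add: prod_zero_iff)

lemma prod_minus_one_minus_nodes:
  "(\<Prod>j\<in>{- int k..int k}. (-1 - g j)) = - (\<Prod>j\<in>{- int k..int k}. (1 - g j))"
proof -
  have "(\<Prod>j\<in>{1..int k}. (-1 - g j) * (-1 - g (- j))) = (\<Prod>j\<in>{1..int k}. (1 - g j) * (1 - g (- j)))"
    by (intro prod.cong) (auto simp: odd algebra_simps)
  then show ?thesis
    by (simp add: prod_symmetric_interval[of "\<lambda>j. -1 - g j"]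
        prod_symmetric_interval[of "\<lambda>j. 1 - g j"] g_zero)
qed

lemma prod_one_minus_nodes:
  "(\<Prod>j\<in>{- int k..int k}. (1 - g j)) = (\<Prod>j\<in>{1..int k}. (1 - (g j)^2))"
  unfolding prod_symmetric_interval[of "\<lambda>j. 1 - g j"]
  by (simp add: g_zero, intro prod.cong) (auto simp: odd algebra_simps power2_eq_square)

lemma weighted_sum_exact:
  fixes p :: "real poly"
  assumes deg: "degree p \<le> 2 * k + 1"
  shows "(\<Sum>i\<in>{- int k..int k}. gamma_w k g i * poly p (g i)) = 2 * (poly p 1 + poly p (-1))"
proof -
  let ?e = "ext_node k g" and ?A = "{- int k..int k}"
  define l1 where "l1 i = (\<Prod>j\<in>{- (int k + 1)..int k} - {i}. (1 - ?e j) / (?e i - ?e j))" for i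
  define l2 where "l2 i = (\<Prod>j\<in>{- int k..int k + 1} - {i}. (-1 - ?e j) / (?e i - ?e j))" for i
  have left: "{- (int k + 1)..int k} = insert (- (int k + 1)) ?A"
    and right: "{- int k..int k + 1} = insert (int k + 1) ?A" by auto
  have "l1 (- int k - 1) = (\<Prod>j\<in>?A. (1 - g j) / (-1 - g j))"
    unfolding l1_def left by (intro prod.cong) (auto simp: ext_node_inner ext_node_outer)
  also have "\<dots> = -1"
    using prod_minus_one_minus_nodes prod_one_minus_nodes_nonzero by (simp add: prod_dividef)
  finally have l1_outer: "l1 (- int k - 1) = -1" .
  have "l2 (int k + 1) = (\<Prod>j\<in>?A. (-1 - g j) / (1 - g j))"
    unfolding l2_def right by (intro prod.cong) (auto simp: ext_node_inner ext_node_outer)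
  also have "\<dots> = -1"
    using prod_minus_one_minus_nodes prod_one_minus_nodes_nonzero by (simp add: prod_dividef)
  finally have l2_outer: "l2 (int k + 1) = -1" .
  have "poly p 1 = (\<Sum>i\<in>{- (int k + 1)..int k}. poly p (?e i) * l1 i)"
    unfolding l1_def by (rule lagrange_interpolation[OF inj_on_ext_node_left]) (use deg in auto)
  also have "\<dots> = - poly p (-1) + (\<Sum>i\<in>?A. poly p (g i) * l1 i)"
    unfolding left by (subst sum.insert) (auto simp: l1_outer ext_node_outer ext_node_inner)
  finally have sum_l1: "(\<Sum>i\<in>?A. poly p (g i) * l1 i) = poly p 1 + poly p (-1)" by simp
  have "poly p (-1) = (\<Sum>i\<in>{- int k..int k + 1}. poly p (?e i) * l2 i)"
    unfolding l2_def by (rule lagrange_interpolation[OF inj_on_ext_node_right]) (use deg in auto)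
  also have "\<dots> = - poly p 1 + (\<Sum>i\<in>?A. poly p (g i) * l2 i)"
    unfolding right by (subst sum.insert) (auto simp: l2_outer ext_node_outer ext_node_inner)
  finally have sum_l2: "(\<Sum>i\<in>?A. poly p (g i) * l2 i) = poly p 1 + poly p (-1)" by simp
  have "(\<Sum>i\<in>?A. gamma_w k g i * poly p (g i))
      = (\<Sum>i\<in>?A. poly p (g i) * l1 i) + (\<Sum>i\<in>?A. poly p (g i) * l2 i)"
    unfolding sum.distrib[symmetric] gamma_w_def l1_def l2_def
    by (intro sum.cong) (auto simp: algebra_simps)
  then show ?thesis using sum_l1 sum_l2 by simp
qed

lemma weighted_sum_edge:
  assumes "\<exists>q. \<forall>t. f t = poly q t" and "poly_deg_le_on_edge f (2 * k + 1)"
  shows "(\<Sum>i\<in>{- int k..int k}. gamma_w k g i * f (g i)) = 2 * (f 1 + f (-1))"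
proof -
  obtain p where "degree p \<le> 2 * k + 1" "\<forall>t. f t = poly p t"
    using assms poly_deg_le_on_edge_global by blast
  then show ?thesis using weighted_sum_exact by simp
qed

lemma gamma_w_closed_form:
  assumes i: "i \<in> {- int k..int k}"
  shows "gamma_w k g i = 4 * (\<Prod>j\<in>{- int k..int k}. (1 - g j)) /
            ((1 - (g i)^2) * (\<Prod>j\<in>{- int k..int k} - {i}. (g i - g j)))"
proof -
  let ?e = "ext_node k g" and ?A = "{- int k..int k}"
  define D where "D = (\<Prod>j\<in>?A - {i}. (g i - g j))"
  define Q1 where "Q1 = (\<Prod>j\<in>?A - {i}. (1 - g j))"
  define Q2 where "Q2 = (\<Prod>j\<in>?A - {i}. (-1 - g j))"
  define W where "W = (\<Prod>j\<in>?A. (1 - g j))"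
  have left: "{- (int k + 1)..int k} - {i} = insert (- (int k + 1)) (?A - {i})"
    and right: "{- int k..int k + 1} - {i} = insert (int k + 1) (?A - {i})" using i by auto
  have gi: "1 - g i \<noteq> 0" "1 + g i \<noteq> 0"
    using i not_one not_minus_one by (auto simp: add_eq_0_iff)
  have "D \<noteq> 0" unfolding D_def using inj i by (auto simp: prod_zero_iff inj_on_def)
  have "(\<Prod>j\<in>{- (int k + 1)..int k} - {i}. (1 - ?e j) / (?e i - ?e j))
      = 2 / (g i + 1) * (\<Prod>j\<in>?A - {i}. (1 - g j) / (g i - g j))"
    unfolding left using i by (subst prod.insert) (auto simp: ext_node_inner ext_node_outer intro!: prod.cong)
  also have "\<dots> = 2 / (g i + 1) * (Q1 / D)" unfolding Q1_def D_def by (simp add: prod_dividef)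
  finally have first: "(\<Prod>j\<in>{- (int k + 1)..int k} - {i}. (1 - ?e j) / (?e i - ?e j)) = \<dots>" .
  have "(\<Prod>j\<in>{- int k..int k + 1} - {i}. (-1 - ?e j) / (?e i - ?e j))
      = -2 / (g i - 1) * (\<Prod>j\<in>?A - {i}. (-1 - g j) / (g i - g j))"
    unfolding right using i by (subst prod.insert) (auto simp: ext_node_inner ext_node_outer intro!: prod.cong)
  also have "\<dots> = -2 / (g i - 1) * (Q2 / D)" unfolding Q2_def D_def by (simp add: prod_dividef)
  finally have second: "(\<Prod>j\<in>{- int k..int k + 1} - {i}. (-1 - ?e j) / (?e i - ?e j)) = \<dots>" .
  have "W = (1 - g i) * Q1" unfolding W_def Q1_def using i by (subst prod.remove) auto
  then have Q1: "Q1 = W / (1 - g i)" using gi by (simp add: field_simps)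
  have "- W = (-1 - g i) * Q2"
    unfolding W_def prod_minus_one_minus_nodes[symmetric] Q2_def using i by (subst prod.remove) auto
  then have Q2: "Q2 = W / (1 + g i)" using gi by (simp add: field_simps)
  have factor: "1 - (g i)^2 = (1 - g i) * (1 + g i)" by (simp add: algebra_simps power2_eq_square)
  have "2 / (g i + 1) * (Q1 / D) + -2 / (g i - 1) * (Q2 / D) = 4 * W / ((1 - (g i)^2) * D)"
  proof -
    have "g i + 1 \<noteq> 0" "g i - 1 \<noteq> 0" using gi by auto
    then show ?thesis unfolding Q1 Q2 factor using gi \<open>D \<noteq> 0\<close>
      by (simp add: divide_simps) (simp add: algebra_simps)
  qed
  then show ?thesis
    unfolding gamma_w_def first second W_def D_def .
qed

lemma prod_node_differences:
  assumes i: "i \<in> {- int k..int k}"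
  shows "(\<Prod>j\<in>{- int k..int k} - {i}. (g i - g j)) =
    (if i = 0 then 1 else g i) * (\<Prod>j\<in>{1..int k}. (if j = \<bar>i\<bar> then 2 * g i else (g i)^2 - (g j)^2))"
proof -
  let ?A = "{- int k..int k}"
  define G where "G j = (if j = i then 1 else g i - g j)" for j
  have "(\<Prod>j\<in>?A - {i}. (g i - g j)) = (\<Prod>j\<in>?A - {i}. G j)"
    by (intro prod.cong) (auto simp: G_def)
  also have "\<dots> = (\<Prod>j\<in>?A. G j)"
    using i by (subst prod.remove[of _ i]) (auto simp: G_def)
  also have "\<dots> = G 0 * (\<Prod>j\<in>{1..int k}. G j * G (- j))"
    by (rule prod_symmetric_interval)
  also have "G 0 = (if i = 0 then 1 else g i)"
    by (simp add: G_def g_zero)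
  also have "(\<Prod>j\<in>{1..int k}. G j * G (- j))
      = (\<Prod>j\<in>{1..int k}. (if j = \<bar>i\<bar> then 2 * g i else (g i)^2 - (g j)^2))"
  proof (intro prod.cong refl)
    fix j assume j: "j \<in> {1..int k}"
    then have "j \<in> ?A" "- j \<in> ?A" "- i \<in> ?A" using i by auto
    then show "G j * G (- j) = (if j = \<bar>i\<bar> then 2 * g i else (g i)^2 - (g j)^2)"
      using j odd unfolding G_def
      by (cases "i \<ge> 0") (auto simp: algebra_simps power2_eq_square)
  qed
  finally show ?thesis .
qed

lemma gamma_w_zero_eq: "gamma_w k g 0 = 4 * (\<Prod>j\<in>{1..int k}. ((g j)\<^sup>2 - 1) / (g j)\<^sup>2)"
proof -
  have zero: "(0::int) \<in> {- int k..int k}" by simp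
  have "(\<Prod>j\<in>{- int k..int k} - {0}. (g 0 - g j)) = (\<Prod>j\<in>{1..int k}. - ((g j)^2))"
    unfolding prod_node_differences[OF zero] using g_zero by (auto intro!: prod.cong)
  then have "gamma_w k g 0 = 4 * ((\<Prod>j\<in>{1..int k}. (1 - (g j)^2)) / (\<Prod>j\<in>{1..int k}. - ((g j)^2)))"
    unfolding gamma_w_closed_form[OF zero] prod_one_minus_nodes by (simp add: g_zero)
  also have "\<dots> = 4 * (\<Prod>j\<in>{1..int k}. ((g j)\<^sup>2 - 1) / (g j)\<^sup>2)"
    by (simp add: prod_dividef[symmetric] minus_divide_left)
  finally show ?thesis .
qed

lemma gamma_w_nonzero_eq:
  assumes i: "i \<in> {- int k..int k}" and nz: "i \<noteq> 0"
  shows "gamma_w k g i = 2 / (g i)\<^sup>2 *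
            (\<Prod>j\<in>{1..int k} - {\<bar>i\<bar>}. (1 - (g j)\<^sup>2) / ((g i)\<^sup>2 - (g j)\<^sup>2))"
proof -
  define m where "m = \<bar>i\<bar>"
  have m: "m \<in> {1..int k}" using i nz unfolding m_def by auto
  have gm: "(g m)^2 = (g i)^2"
    using odd[OF i] unfolding m_def by (cases "i \<ge> 0") auto
  have "g i \<noteq> 0" using inj_onD[OF inj, of i 0] i nz g_zero by auto
  have "1 - (g i)^2 \<noteq> 0"
    using not_one[OF i] not_minus_one[OF i] by (auto simp: power2_eq_1_iff)
  define P1 where "P1 = (\<Prod>j\<in>{1..int k} - {m}. (1 - (g j)^2))"
  define P2 where "P2 = (\<Prod>j\<in>{1..int k} - {m}. ((g i)^2 - (g j)^2))"
  have W: "(\<Prod>j\<in>{- int k..int k}. (1 - g j)) = (1 - (g i)^2) * P1"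
    unfolding prod_one_minus_nodes P1_def using m by (subst prod.remove[of _ m]) (auto simp: gm)
  have "(\<Prod>j\<in>{1..int k}. (if j = m then 2 * g i else (g i)^2 - (g j)^2)) = 2 * g i * P2"
    unfolding P2_def using m by (subst prod.remove[of _ m]) (auto intro!: prod.cong)
  then have D: "(\<Prod>j\<in>{- int k..int k} - {i}. (g i - g j)) = g i * (2 * g i) * P2"
    unfolding prod_node_differences[OF i] m_def[symmetric] using nz by simp
  then have "P2 \<noteq> 0"
    using inj i by (auto simp: prod_zero_iff inj_on_def)
  have "gamma_w k g i = 4 * ((1 - (g i)^2) * P1) / ((1 - (g i)^2) * (g i * (2 * g i) * P2))"
    unfolding gamma_w_closed_form[OF i] W D ..
  also have "\<dots> = 2 / (g i)\<^sup>2 * (P1 / P2)"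
    using \<open>g i \<noteq> 0\<close> \<open>1 - (g i)^2 \<noteq> 0\<close> \<open>P2 \<noteq> 0\<close> by (simp add: field_simps power2_eq_square)
  also have "P1 / P2 = (\<Prod>j\<in>{1..int k} - {\<bar>i\<bar>}. (1 - (g j)\<^sup>2) / ((g i)\<^sup>2 - (g j)\<^sup>2))"
    unfolding P1_def P2_def m_def by (rule prod_dividef[symmetric])
  finally show ?thesis .
qed

end
lemma legendre_zeros_symmetric_nodes:
  assumes g_mono: "strict_mono_on {- int k..int k} g"
    and g_zeros: "{x. poly (legendre (2 * k + 1)) x = 0} = g ` {- int k..int k}"
  shows "symmetric_nodes k g"
proof
  let ?A = "{- int k..int k}" and ?L = "legendre (2 * k + 1)"
  let ?S = "{x. poly ?L x = 0}"
  have zero: "poly ?L (g j) = 0" if "j \<in> ?A" for j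
  proof -
    have "g j \<in> ?S" unfolding g_zeros using that by (rule imageI)
    then show ?thesis by simp
  qed
  show "inj_on g ?A"
    using g_mono by (rule strict_mono_on_imp_inj_on)
  show "g j \<noteq> 1" "g j \<noteq> -1" if "j \<in> ?A" for j
    using zero[OF that] legendre_at_one[of "2 * k + 1"] legendre_at_minus_one[of "2 * k + 1"]
    by auto
  have L_odd: "poly ?L (- x) = - poly ?L x" for x
    using legendre_reflect[of "2 * k + 1"] by simp
  have S_odd: "uminus ` ?S = ?S"
  proof
    show "uminus ` ?S \<subseteq> ?S" using L_odd by auto
    show "?S \<subseteq> uminus ` ?S"
    proof
      fix x assume "x \<in> ?S"
      then have "- x \<in> ?S" using L_odd by simp
      then show "x \<in> uminus ` ?S" by (rule rev_image_eqI) simp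
    qed
  qed
  text \<open>Since \<open>L\<^sub>2\<^sub>k\<^sub>+\<^sub>1\<close> is odd, \<open>i \<mapsto> - g (- i)\<close> is another increasing enumeration of its zeros.\<close>
  define h where "h i = - g (- i)" for i
  have h_mono: "strict_mono_on ?A h"
  proof (rule strict_mono_onI)
    fix r s assume "r \<in> ?A" "s \<in> ?A" "r < s"
    then have "g (- s) < g (- r)" by (intro strict_mono_onD[OF g_mono]) auto
    then show "h r < h s" by (simp add: h_def)
  qed
  have h_image: "g ` ?A = h ` ?A"
  proof -
    have "h ` ?A = (\<lambda>x. - g x) ` (uminus ` ?A)"
      unfolding image_image by (rule image_cong) (simp_all add: h_def)
    also have "\<dots> = uminus ` ?S"
      unfolding g_zeros by (simp add: image_uminus_atLeastAtMost image_image)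
    also have "\<dots> = g ` ?A" by (simp only: g_zeros[symmetric] S_odd)
    finally show ?thesis ..
  qed
  show "g (- j) = - g j" if "j \<in> ?A" for j
  proof -
    have "- j \<in> ?A" using that by simp
    from strict_mono_on_image_eq_imp_eq[OF finite_atLeastAtMost_int g_mono h_mono h_image this]
    show ?thesis by (simp add: h_def)
  qed
qed

theorem mainTheorem1:
  fixes k :: nat and g :: "int \<Rightarrow> real" and v :: "real \<Rightarrow> real \<Rightarrow> real"
  assumes g_mono: "strict_mono_on {- int k..int k} g"
    and g_zeros: "{x. poly (legendre (2 * k + 1)) x = 0} = g ` {- int k..int k}"
    and v_poly: "bivariate_polynomial v"
    and e1: "poly_deg_le_on_edge (\<lambda>t. v 1 t) (2 * k + 1)"
    and e2: "poly_deg_le_on_edge (\<lambda>t. v (-1) t) (2 * k + 1)"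
    and e3: "poly_deg_le_on_edge (\<lambda>t. v t 1) (2 * k + 1)"
    and e4: "poly_deg_le_on_edge (\<lambda>t. v t (-1)) (2 * k + 1)"
  shows "(\<forall>i\<in>{- int k..int k}. g (- i) = - g i) \<and> g 0 = 0
    \<and> (\<Sum>i\<in>{- int k..int k}. gamma_w k g i * (v 1 (g i) + v (-1) (g i)))
        = (\<Sum>i\<in>{- int k..int k}. gamma_w k g i * (v (g i) 1 + v (g i) (-1)))
    \<and> (\<forall>i\<in>{- int k..int k}. i \<noteq> 0 \<longrightarrow>
          gamma_w k g i = 2 / (g i)\<^sup>2 *
            (\<Prod>j\<in>{1..int k} - {\<bar>i\<bar>}. (1 - (g j)\<^sup>2) / ((g i)\<^sup>2 - (g j)\<^sup>2)))
    \<and> gamma_w k g 0 = 4 * (\<Prod>j\<in>{1..int k}. ((g j)\<^sup>2 - 1) / (g j)\<^sup>2)"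
proof -
  interpret symmetric_nodes k g
    using g_mono g_zeros by (rule legendre_zeros_symmetric_nodes)
  note vertical = weighted_sum_edge[OF bivariate_polynomial_restrict_fst[OF v_poly]]
  note horizontal = weighted_sum_edge[OF bivariate_polynomial_restrict_snd[OF v_poly]]
  let ?A = "{- int k..int k}"
  have "(\<Sum>i\<in>?A. gamma_w k g i * (v 1 (g i) + v (-1) (g i)))
      = (\<Sum>i\<in>?A. gamma_w k g i * v 1 (g i)) + (\<Sum>i\<in>?A. gamma_w k g i * v (-1) (g i))"
    by (simp add: distrib_left sum.distrib)
  also have "\<dots> = 2 * (v 1 1 + v 1 (-1)) + 2 * (v (-1) 1 + v (-1) (-1))"
    using vertical[OF e1] vertical[OF e2] by simp
  also have "\<dots> = 2 * (v 1 1 + v (-1) 1) + 2 * (v 1 (-1) + v (-1) (-1))"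
    by simp
  also have "\<dots> = (\<Sum>i\<in>?A. gamma_w k g i * v (g i) 1) + (\<Sum>i\<in>?A. gamma_w k g i * v (g i) (-1))"
    using horizontal[OF e3] horizontal[OF e4] by simp
  also have "\<dots> = (\<Sum>i\<in>?A. gamma_w k g i * (v (g i) 1 + v (g i) (-1)))"
    by (simp add: distrib_left sum.distrib)
  finally show ?thesis
    using odd g_zero gamma_w_nonzero_eq gamma_w_zero_eq by blast
qed

end
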